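(* Let $\mathcal{D}(x)$, $x\in\mathbb{R}^n$, be probability distributions on $\mathbb{R}^m$ with finite first moments satisfying $\epsilon$-sensitivity: $W_1(\mathcal{D}(x),\mathcal{D}(y))\le\epsilon\|x-y\|_2$ for all $x,y$. Let $l:\mathbb{R}^n\times\mathbb{R}^m\to\mathbb{R}$ be such that for every $v$, $x\mapsto l(x,v)$ is convex and differentiable; $|l(x,v_1)-l(x,v_2)|\le L^c_2\|v_1-v_2\|$ for all $x,v_1,v_2$; $\|\nabla_x l(x,v)\|\le L^c_3$ for all $x,v$; and all expectations below are finite with differentiation and expectation over $v$ interchangeable. Let $F(x)=\mathbb{E}_{v\sim\mathcal{D}(x)}[l(x,v)]$, let $x^*$ be a minimizer of $F$ over $\mathbb{R}^n$, and let $(x^r)$ be defined by $x^{r+1}=x^r-\eta^r\,\mathbb{E}_{v\sim\mathcal{D}(x^r)}[\nabla_x l(x^r,v)]$ with step sizes $\eta^r>0$. Then for every $k\ge0$, $$\min_{0\le r\le k}\{F(x^r)-F(x^* )\}\le\frac{\epsilon L^c_2\sum_{r=0}^k\eta^r\|x^*-x^r\|}{\sum_{r=0}^k\eta^r}+\frac{\|x^0-x^*\|^2+(L^c_3)^2\sum_{r=0}^k(\eta^r)^2}{2\sum_{r=0}^k\eta^r}.$$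
   Context: $W_1$ denotes the 1-Wasserstein distance. $\mathcal{D}(x)$ is the decision-dependent distribution of the random parameter $v$ under decision $x$. The sequence $(x^r)$ is the infinite-sample limit of the Approximate Gradient Descent iteration, whose update direction is the expected gradient $\mathbb{E}_{v\sim\mathcal{D}(x)}[\nabla_x l(x,v)]$ rather than the gradient of $F$. *)

theory Defs
  imports "HOL-Probability.Probability"
begin

definition couplings :: "'b::euclidean_space measure \<Rightarrow> 'b measure \<Rightarrow> ('b \<times> 'b) measure set" where
  "couplings \<mu> \<nu> = {\<pi>. prob_space \<pi> \<and> sets \<pi> = sets borel \<and>
      distr \<pi> borel fst = \<mu> \<and> distr \<pi> borel snd = \<nu>}"

definition W1 :: "'b::euclidean_space measure \<Rightarrow> 'b measure \<Rightarrow> ennreal" where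
  "W1 \<mu> \<nu> = (INF \<pi> \<in> couplings \<mu> \<nu>. \<integral>\<^sup>+ p. ennreal (dist (fst p) (snd p)) \<partial>\<pi>)"

definition grad :: "('a::euclidean_space \<Rightarrow> real) \<Rightarrow> 'a \<Rightarrow> 'a" where
  "grad f x = (SOME D. GDERIV f x :> D)"

end

theory Submission imports Defs begin

text \<open>
  Write \<open>g\<^sup>r\<close> for the expected gradient used in the step from \<open>x\<^sup>r\<close>. Integrating the tangent inequality
  of the convex losses \<open>l(\<cdot>, v)\<close> at \<open>x\<^sup>r\<close> over \<open>v \<sim> \<D>(x\<^sup>r)\<close> gives
  \<open>F(x\<^sup>r) \<le> \<EE>\<^bsub>\<D>(x\<^sup>r)\<^esub>[l(x\<^sup>*, v)] + g\<^sup>r \<bullet> (x\<^sup>r - x\<^sup>*)\<close>. Changing the distribution from \<open>\<D>(x\<^sup>r)\<close> to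
  \<open>\<D>(x\<^sup>*)\<close> costs at most \<open>\<epsilon> L\<^sub>2 \<parallel>x\<^sup>r - x\<^sup>*\<parallel>\<close>, since \<open>l(x\<^sup>*, \<cdot>)\<close> is \<open>L\<^sub>2\<close>-Lipschitz and the two
  distributions admit a coupling of transport cost close to \<open>\<epsilon> \<parallel>x\<^sup>r - x\<^sup>*\<parallel>\<close>. The inner product term
  is the usual one of subgradient descent: expanding \<open>\<parallel>x\<^sup>r\<^sup>+\<^sup>1 - x\<^sup>*\<parallel>\<^sup>2\<close> bounds \<open>\<eta>\<^sup>r g\<^sup>r \<bullet> (x\<^sup>r - x\<^sup>*)\<close>
  by a telescoping difference of squared distances plus \<open>(\<eta>\<^sup>r L\<^sub>3)\<^sup>2 / 2\<close>. Summing with weights \<open>\<eta>\<^sup>r\<close>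
  and bounding the minimum by the weighted mean gives the claim.
\<close>

lemma has_gderiv_grad:
  fixes f :: "'a::euclidean_space \<Rightarrow> real"
  assumes "f differentiable (at x)"
  shows "GDERIV f x :> grad f x"
proof -
  obtain f' where f': "(f has_derivative f') (at x)"
    using assms unfolding differentiable_def by blast
  have "f' h = h \<bullet> adjoint f' 1" for h
    using adjoint_works[OF has_derivative_linear[OF f'], of h 1] by simp
  then have "f' = (\<lambda>h. h \<bullet> adjoint f' 1)"
    by (simp add: fun_eq_iff)
  with f' have "GDERIV f x :> adjoint f' 1"
    unfolding gderiv_def by simp
  then show ?thesis
    unfolding grad_def by (rule someI)
qed

lemma convex_on_grad_above_tangent:
  fixes f :: "'a::euclidean_space \<Rightarrow> real"
  assumes convex: "convex_on UNIV f" and diff: "f differentiable (at x)"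
  shows "f x + grad f x \<bullet> (y - x) \<le> f y"
proof -
  define \<phi> where "\<phi> t = f (x + t *\<^sub>R (y - x))" for t :: real
  have "((\<lambda>t. x + t *\<^sub>R (y - x)) has_derivative (\<lambda>t. t *\<^sub>R (y - x))) (at 0)"
    by (auto intro!: derivative_eq_intros)
  moreover have "(f has_derivative (\<lambda>h. h \<bullet> grad f x)) (at (x + 0 *\<^sub>R (y - x)))"
    using has_gderiv_grad[OF diff] unfolding gderiv_def by simp
  ultimately have "(\<phi> has_derivative (\<lambda>t. (t *\<^sub>R (y - x)) \<bullet> grad f x)) (at 0)"
    unfolding \<phi>_def by (rule has_derivative_compose)
  then have deriv: "(\<phi> has_field_derivative ((y - x) \<bullet> grad f x)) (at 0)"
    unfolding has_field_derivative_def by (rule has_derivative_eq_rhs) (simp add: fun_eq_iff)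
  have "convex_on UNIV \<phi>"
  proof (rule convex_onI)
    fix t a b :: real assume "0 < t" "t < 1"
    moreover have "x + ((1 - t) *\<^sub>R a + t *\<^sub>R b) *\<^sub>R (y - x)
        = (1 - t) *\<^sub>R (x + a *\<^sub>R (y - x)) + t *\<^sub>R (x + b *\<^sub>R (y - x))"
      by (simp add: algebra_simps)
    ultimately show "\<phi> ((1 - t) *\<^sub>R a + t *\<^sub>R b) \<le> (1 - t) * \<phi> a + t * \<phi> b"
      unfolding \<phi>_def using convex_onD[OF convex, of t] by simp
  qed simp
  then have "\<phi> 1 - \<phi> 0 \<ge> ((y - x) \<bullet> grad f x) * (1 - 0)"
    by (rule convex_on_imp_above_tangent) (use deriv in auto)
  then show ?thesis
    unfolding \<phi>_def by (simp add: inner_commute)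
qed

lemma integral_above_tangent:
  fixes l :: "'a::euclidean_space \<Rightarrow> 'b \<Rightarrow> real"
  assumes convex: "\<And>v. convex_on UNIV (\<lambda>z. l z v)"
    and diff: "\<And>v. (\<lambda>z. l z v) differentiable (at x)"
    and int_x: "integrable M (l x)" and int_y: "integrable M (l y)"
    and int_grad: "integrable M (\<lambda>v. grad (\<lambda>z. l z v) x)"
  shows "(\<integral>v. l x v \<partial>M) + (\<integral>v. grad (\<lambda>z. l z v) x \<partial>M) \<bullet> (y - x) \<le> (\<integral>v. l y v \<partial>M)"
proof -
  have "(\<integral>v. l x v \<partial>M) + (\<integral>v. grad (\<lambda>z. l z v) x \<partial>M) \<bullet> (y - x)
      = (\<integral>v. l x v + grad (\<lambda>z. l z v) x \<bullet> (y - x) \<partial>M)"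
    using int_x int_grad by simp
  also have "\<dots> \<le> (\<integral>v. l y v \<partial>M)"
    using convex_on_grad_above_tangent[OF convex diff] int_x int_y int_grad
    by (intro integral_mono) auto
  finally show ?thesis .
qed

lemma coupling_integral_diff_le:
  fixes f :: "'b::euclidean_space \<Rightarrow> real"
  assumes coupling: "\<pi> \<in> couplings \<mu> \<nu>"
    and int_\<mu>: "integrable \<mu> f" and int_\<nu>: "integrable \<nu> f"
    and lip: "\<And>a b. \<bar>f a - f b\<bar> \<le> L * norm (a - b)"
    and cost: "(\<integral>\<^sup>+ p. ennreal (dist (fst p) (snd p)) \<partial>\<pi>) < \<infinity>"
  shows "integral\<^sup>L \<mu> f - integral\<^sup>L \<nu> f \<le> L * enn2real (\<integral>\<^sup>+ p. ennreal (dist (fst p) (snd p)) \<partial>\<pi>)"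
proof -
  have sets_\<pi>: "sets \<pi> = sets borel" and \<mu>: "distr \<pi> borel fst = \<mu>" and \<nu>: "distr \<pi> borel snd = \<nu>"
    using coupling unfolding couplings_def by auto
  have "fst \<in> measurable (borel::('b \<times> 'b) measure) borel"
    using measurable_fst[of "borel::'b measure" "borel::'b measure"] unfolding borel_prod .
  moreover have "snd \<in> measurable (borel::('b \<times> 'b) measure) borel"
    using measurable_snd[of "borel::'b measure" "borel::'b measure"] unfolding borel_prod .
  ultimately have fst: "fst \<in> measurable \<pi> borel" and snd: "snd \<in> measurable \<pi> borel"
    using measurable_cong_sets[OF sets_\<pi> refl] by auto
  have sets_\<mu>: "sets \<mu> = sets borel"
    using \<mu> by (metis sets_distr)
  have f: "f \<in> borel_measurable borel"
    using borel_measurable_integrable[OF int_\<mu>] by (simp add: measurable_cong_sets[OF sets_\<mu> refl])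
  have int_fst: "integrable \<pi> (\<lambda>p. f (fst p))" and int_snd: "integrable \<pi> (\<lambda>p. f (snd p))"
    using int_\<mu> int_\<nu> integrable_distr_eq[OF fst f] integrable_distr_eq[OF snd f] \<mu> \<nu> by simp_all
  have dist: "(\<lambda>p. dist (fst p) (snd p)) \<in> borel_measurable \<pi>"
    using borel_measurable_dist[OF fst snd] .
  have int_dist: "integrable \<pi> (\<lambda>p. dist (fst p) (snd p))"
    using cost dist by (intro integrableI_nonneg) auto
  have "integral\<^sup>L \<mu> f - integral\<^sup>L \<nu> f = (\<integral>p. f (fst p) - f (snd p) \<partial>\<pi>)"
    using integral_distr[OF fst f] integral_distr[OF snd f] \<mu> \<nu> int_fst int_snd by simp
  also have "\<dots> \<le> (\<integral>p. L * dist (fst p) (snd p) \<partial>\<pi>)"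
    using int_fst int_snd int_dist lip by (intro integral_mono) (auto simp: dist_norm abs_le_iff)
  also have "\<dots> = L * (\<integral>p. dist (fst p) (snd p) \<partial>\<pi>)"
    by simp
  also have "\<dots> = L * enn2real (\<integral>\<^sup>+ p. ennreal (dist (fst p) (snd p)) \<partial>\<pi>)"
    using dist by (subst integral_eq_nn_integral) auto
  finally show ?thesis .
qed

lemma integral_diff_le_W1:
  fixes f :: "'b::euclidean_space \<Rightarrow> real"
  assumes int_\<mu>: "integrable \<mu> f" and int_\<nu>: "integrable \<nu> f"
    and lip: "\<And>a b. \<bar>f a - f b\<bar> \<le> L * norm (a - b)"
    and W1: "W1 \<mu> \<nu> \<le> ennreal c" and "c \<ge> 0"
  shows "integral\<^sup>L \<mu> f - integral\<^sup>L \<nu> f \<le> L * c"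
proof (rule field_le_epsilon)
  fix e :: real assume "e > 0"
  have "L \<ge> 0"
  proof -
    obtain b :: 'b where "b \<in> Basis" using nonempty_Basis by blast
    with lip[of 0 b] show ?thesis by (simp add: zero_le_mult_iff)
  qed
  define d where "d = e / (L + 1)"
  have "d > 0" and "L * d \<le> e"
    using \<open>e > 0\<close> \<open>L \<ge> 0\<close> unfolding d_def by (simp_all add: field_simps)
  have "ennreal c < ennreal (c + d)"
    using \<open>c \<ge> 0\<close> \<open>d > 0\<close> by (intro ennreal_lessI) auto
  with W1 have "W1 \<mu> \<nu> < ennreal (c + d)"
    by (rule le_less_trans)
  then obtain \<pi> where \<pi>: "\<pi> \<in> couplings \<mu> \<nu>"
    and cost: "(\<integral>\<^sup>+ p. ennreal (dist (fst p) (snd p)) \<partial>\<pi>) < ennreal (c + d)"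
    unfolding W1_def INF_less_iff by blast
  have "(\<integral>\<^sup>+ p. ennreal (dist (fst p) (snd p)) \<partial>\<pi>) < \<infinity>"
    using order.strict_trans[OF cost ennreal_less_top] by simp
  with \<pi> have "integral\<^sup>L \<mu> f - integral\<^sup>L \<nu> f
      \<le> L * enn2real (\<integral>\<^sup>+ p. ennreal (dist (fst p) (snd p)) \<partial>\<pi>)"
    by (rule coupling_integral_diff_le[OF _ int_\<mu> int_\<nu> lip])
  also have "\<dots> \<le> L * enn2real (ennreal (c + d))"
    using cost \<open>L \<ge> 0\<close> by (intro mult_left_mono enn2real_mono) simp_all
  also have "\<dots> = L * c + L * d"
    using \<open>c \<ge> 0\<close> \<open>d > 0\<close> by (simp add: distrib_left del: ennreal_plus)
  finally show "integral\<^sup>L \<mu> f - integral\<^sup>L \<nu> f \<le> L * c + e"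
    using \<open>L * d \<le> e\<close> by linarith
qed

lemma gradient_step_inner_le:
  fixes x z g :: "'a::real_inner"
  assumes "norm g \<le> G"
  shows "\<eta> * (g \<bullet> (x - z)) \<le> G^2 * \<eta>^2 / 2 + (norm (x - z)^2 / 2 - norm (x - \<eta> *\<^sub>R g - z)^2 / 2)"
proof -
  have "norm (x - \<eta> *\<^sub>R g - z)^2 = norm (x - z)^2 - 2 * \<eta> * (g \<bullet> (x - z)) + \<eta>^2 * norm g^2"
    unfolding power2_norm_eq_inner
    by (simp add: inner_diff_left inner_diff_right inner_commute power2_eq_square algebra_simps)
  moreover have "\<eta>^2 * norm g^2 \<le> \<eta>^2 * G^2"
    using assms by (intro mult_left_mono power_mono) simp_all
  ultimately show ?thesis
    by (simp add: field_simps)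
qed

lemma Min_le_weighted_telescoping:
  fixes a b c \<eta> :: "nat \<Rightarrow> real"
  assumes pos: "\<And>r. \<eta> r > 0"
    and step: "\<And>r. \<eta> r * a r \<le> b r + (c r - c (Suc r))"
    and nonneg: "c (Suc k) \<ge> 0"
  shows "(MIN r\<in>{0..k}. a r) \<le> ((\<Sum>r=0..k. b r) + c 0) / (\<Sum>r=0..k. \<eta> r)"
proof -
  have "(\<Sum>r=0..k. \<eta> r) * (MIN r\<in>{0..k}. a r) = (\<Sum>r=0..k. \<eta> r * (MIN r\<in>{0..k}. a r))"
    by (rule sum_distrib_right)
  also have "\<dots> \<le> (\<Sum>r=0..k. \<eta> r * a r)"
    using pos by (intro sum_mono mult_left_mono) (auto intro: less_imp_le)
  also have "\<dots> \<le> (\<Sum>r=0..k. b r + (c r - c (Suc r)))"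
    by (intro sum_mono step)
  also have "\<dots> = (\<Sum>r=0..k. b r) + c 0 - c (Suc k)"
    by (simp add: sum.distrib atLeast0AtMost sum_telescope)
  finally show ?thesis
    using nonneg sum_pos[of "{0..k}" \<eta>] pos by (simp add: pos_le_divide_eq mult.commute)
qed

lemma expected_loss_gap_le:
  fixes D :: "'a::euclidean_space \<Rightarrow> 'b::euclidean_space measure" and l :: "'a \<Rightarrow> 'b \<Rightarrow> real"
  assumes sensitive: "W1 (D x) (D y) \<le> ennreal (\<epsilon> * norm (x - y))" and "\<epsilon> \<ge> 0"
    and convex: "\<And>v. convex_on UNIV (\<lambda>z. l z v)"
    and differentiable: "\<And>v. (\<lambda>z. l z v) differentiable (at x)"
    and lip_v: "\<And>v1 v2. \<bar>l y v1 - l y v2\<bar> \<le> L2 * norm (v1 - v2)"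
    and int_x: "integrable (D x) (l x)" and int_y: "\<And>w. integrable (D w) (l y)"
    and int_grad: "integrable (D x) (\<lambda>v. grad (\<lambda>z. l z v) x)"
  shows "(\<integral>v. l x v \<partial>D x) - (\<integral>v. l y v \<partial>D y)
    \<le> \<epsilon> * L2 * norm (y - x) + (\<integral>v. grad (\<lambda>z. l z v) x \<partial>D x) \<bullet> (x - y)"
proof -
  have "(\<integral>v. l x v \<partial>D x) - (\<integral>v. l y v \<partial>D x) \<le> (\<integral>v. grad (\<lambda>z. l z v) x \<partial>D x) \<bullet> (x - y)"
    using integral_above_tangent[OF convex differentiable int_x int_y int_grad]
    by (simp add: inner_diff_right)
  moreover have "(\<integral>v. l y v \<partial>D x) - (\<integral>v. l y v \<partial>D y) \<le> L2 * (\<epsilon> * norm (x - y))"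
    using integral_diff_le_W1[OF int_y int_y lip_v sensitive] \<open>\<epsilon> \<ge> 0\<close> by simp
  ultimately show ?thesis
    by (simp add: norm_minus_commute mult.commute mult.left_commute)
qed

text \<open>The argument never uses that \<open>xstar\<close> minimizes \<open>F\<close>, nor the moment and interchange
  hypotheses: the bound holds for every reference point \<open>xstar\<close>.\<close>

theorem theorem2:
  fixes D :: "'a::euclidean_space \<Rightarrow> 'b::euclidean_space measure"
    and l :: "'a \<Rightarrow> 'b \<Rightarrow> real"
    and \<epsilon> L2 L3 :: real
    and xstar :: 'a
    and xs :: "nat \<Rightarrow> 'a"
    and \<eta> :: "nat \<Rightarrow> real"
    and k :: nat
  assumes prob: "\<And>x. prob_space (D x)"
    and sets_D: "\<And>x. sets (D x) = sets borel"
    and moment: "\<And>x. integrable (D x) (\<lambda>v. norm v)"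
    and eps_nonneg: "\<epsilon> \<ge> 0"
    and sensitive: "\<And>x y. W1 (D x) (D y) \<le> ennreal (\<epsilon> * norm (x - y))"
    and convex: "\<And>v. convex_on UNIV (\<lambda>x. l x v)"
    and differentiable: "\<And>x v. (\<lambda>z. l z v) differentiable (at x)"
    and lip_v: "\<And>x v1 v2. \<bar>l x v1 - l x v2\<bar> \<le> L2 * norm (v1 - v2)"
    and grad_bound: "\<And>x v. norm (grad (\<lambda>z. l z v) x) \<le> L3"
    and int_l: "\<And>x y. integrable (D y) (\<lambda>v. l x v)"
    and int_grad: "\<And>x y. integrable (D y) (\<lambda>v. grad (\<lambda>z. l z v) x)"
    and interchange: "\<And>x y. GDERIV (\<lambda>z. \<integral>v. l z v \<partial>D y) x :>
                                (\<integral>v. grad (\<lambda>z. l z v) x \<partial>D y)"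
    and minimizer: "\<And>z. (\<integral>v. l xstar v \<partial>D xstar) \<le> (\<integral>v. l z v \<partial>D z)"
    and step_pos: "\<And>r. \<eta> r > 0"
    and iter: "\<And>r. xs (Suc r) = xs r - \<eta> r *\<^sub>R (\<integral>v. grad (\<lambda>z. l z v) (xs r) \<partial>D (xs r))"
  shows "(MIN r\<in>{0..k}. (\<integral>v. l (xs r) v \<partial>D (xs r)) - (\<integral>v. l xstar v \<partial>D xstar))
          \<le> \<epsilon> * L2 * (\<Sum>r=0..k. \<eta> r * norm (xstar - xs r)) / (\<Sum>r=0..k. \<eta> r)
            + (norm (xs 0 - xstar)^2 + L3^2 * (\<Sum>r=0..k. (\<eta> r)^2)) / (2 * (\<Sum>r=0..k. \<eta> r))"
proof -
  define g where "g r = (\<integral>v. grad (\<lambda>z. l z v) (xs r) \<partial>D (xs r))" for r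
  have g_bound: "norm (g r) \<le> L3" for r
    unfolding g_def
    by (rule order_trans[OF integral_norm_bound prob_space.integral_le_const[OF prob integrable_norm[OF int_grad]]])
      (simp add: grad_bound)
  have step: "\<eta> r * ((\<integral>v. l (xs r) v \<partial>D (xs r)) - (\<integral>v. l xstar v \<partial>D xstar))
      \<le> (\<epsilon> * L2 * (\<eta> r * norm (xstar - xs r)) + L3^2 * (\<eta> r)^2 / 2)
        + (norm (xs r - xstar)^2 / 2 - norm (xs (Suc r) - xstar)^2 / 2)" for r
  proof -
    have "\<eta> r * ((\<integral>v. l (xs r) v \<partial>D (xs r)) - (\<integral>v. l xstar v \<partial>D xstar))
        \<le> \<eta> r * (\<epsilon> * L2 * norm (xstar - xs r) + g r \<bullet> (xs r - xstar))"
      using expected_loss_gap_le[where x = "xs r" and y = xstar, OF sensitive eps_nonneg convex differentiable lip_v int_l int_l int_grad]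
        step_pos[of r]
      unfolding g_def by (intro mult_left_mono) auto
    also have "\<dots> = \<epsilon> * L2 * (\<eta> r * norm (xstar - xs r)) + \<eta> r * (g r \<bullet> (xs r - xstar))"
      by (simp add: algebra_simps)
    also have "\<dots> \<le> \<epsilon> * L2 * (\<eta> r * norm (xstar - xs r))
        + (L3^2 * (\<eta> r)^2 / 2 + (norm (xs r - xstar)^2 / 2 - norm (xs (Suc r) - xstar)^2 / 2))"
      using gradient_step_inner_le[OF g_bound[of r], where \<eta> = "\<eta> r" and x = "xs r" and z = xstar] iter[of r]
      unfolding g_def by simp
    finally show ?thesis
      by (simp only: add.assoc)
  qed
  have "(\<Sum>r=0..k. \<epsilon> * L2 * (\<eta> r * norm (xstar - xs r)) + L3^2 * (\<eta> r)^2 / 2)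
      = \<epsilon> * L2 * (\<Sum>r=0..k. \<eta> r * norm (xstar - xs r)) + L3^2 * (\<Sum>r=0..k. (\<eta> r)^2) / 2"
    by (simp add: sum.distrib sum_distrib_left sum_divide_distrib)
  moreover have "(a + q / 2 + p / 2) / S = a / S + (p + q) / (2 * S)" for a p q S :: real
    by (simp add: add_divide_distrib)
  ultimately show ?thesis
    using Min_le_weighted_telescoping[where c = "\<lambda>r. norm (xs r - xstar)^2 / 2",
        OF step_pos step, of k]
    by simp
qed

end
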